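(* Let $J=p\ge1$, $\sigma_\varepsilon^2>0$, $\sigma_\gamma^2>0$, $0\le\rho\le1$, and let $\mathbf{\Sigma}_\gamma=\sigma_\gamma^2\big((1-\rho)\mathbf{I}_J+\rho\mathbf{1}_J\mathbf{1}_J^{\mathrm T}\big)$ (compound symmetry). Let $\mathbf{A}_{\bm\beta}$ be a nonsingular $J\times J$ matrix and $I>0$. For an approximate design $\xi=(I_1,\dots,I_J)$ (reals $I_j\ge0$ with $\sum_jI_j=I$) let $$\mathbf{M}_{\bm\beta}(\xi)=\mathbf{A}_{\bm\beta}^{\mathrm T}\mathbf{M}_0(\xi)^{1/2}\big(\sigma_\varepsilon^2\mathbf{I}_J+\mathbf{M}_0(\xi)^{1/2}\mathbf{\Sigma}_\gamma\mathbf{M}_0(\xi)^{1/2}\big)^{-1}\mathbf{M}_0(\xi)^{1/2}\mathbf{A}_{\bm\beta},\quad \mathbf{M}_0(\xi)^{1/2}=\mathrm{diag}(\sqrt{I_1},\dots,\sqrt{I_J}).$$ Then the uniform design $\xi^*=(I/J,\dots,I/J)$ is the $D$-optimal approximate design.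
   Context: $\mathbf{A}_{\bm\beta}$ is the Jacobian of the mean response curve at a fixed parameter $\bm\beta$. $\bm\beta$ is estimable under $\xi$ if $\mathbf{A}_{\bm\beta}$ has full column rank and its columns lie in the column space of $\mathrm{diag}(I_1,\dots,I_J)$. A design $\xi^*$ is $D$-optimal if $\log\det\mathbf{M}_{\bm\beta}(\xi^* )\ge\log\det\mathbf{M}_{\bm\beta}(\xi)$ for all approximate designs $\xi$ with total $I$ under which $\bm\beta$ is estimable. *)

theory Defs
  imports "HOL-Analysis.Analysis"
begin

text \<open>The index type 'n has J = CARD('n) elements. An approximate design is a
vector of real group sizes I_j.\<close>

definition is_design :: "real \<Rightarrow> real^'n \<Rightarrow> bool" where
  "is_design I \<xi> \<longleftrightarrow> (\<forall>j. \<xi> $ j \<ge> 0) \<and> (\<Sum>j\<in>UNIV. \<xi> $ j) = I"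

definition uniform_design :: "real \<Rightarrow> real^'n" where
  "uniform_design I = (\<chi> j. I / real CARD('n))"

definition M0 :: "real^'n \<Rightarrow> real^'n^'n" where
  "M0 \<xi> = (\<chi> i j. if i = j then \<xi> $ i else 0)"

definition M0_sqrt :: "real^'n \<Rightarrow> real^'n^'n" where
  "M0_sqrt \<xi> = (\<chi> i j. if i = j then sqrt (\<xi> $ i) else 0)"

definition Sigma_gamma :: "real \<Rightarrow> real \<Rightarrow> real^'n^'n" where
  "Sigma_gamma sg2 \<rho> = sg2 *\<^sub>R ((1 - \<rho>) *\<^sub>R mat 1 + \<rho> *\<^sub>R (\<chi> i j. 1))"

definition M_beta :: "real \<Rightarrow> real \<Rightarrow> real \<Rightarrow> real^'n^'n \<Rightarrow> real^'n \<Rightarrow> real^'n^'n" where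
  "M_beta se2 sg2 \<rho> A \<xi> =
     transpose A ** M0_sqrt \<xi> **
     matrix_inv (se2 *\<^sub>R mat 1 + M0_sqrt \<xi> ** Sigma_gamma sg2 \<rho> ** M0_sqrt \<xi>) **
     M0_sqrt \<xi> ** A"

definition estimable :: "real^'n^'n \<Rightarrow> real^'n \<Rightarrow> bool" where
  "estimable A \<xi> \<longleftrightarrow> rank A = CARD('n) \<and> (\<forall>j. column j A \<in> range (\<lambda>x. M0 \<xi> *v x))"

definition D_optimal :: "real \<Rightarrow> real \<Rightarrow> real \<Rightarrow> real^'n^'n \<Rightarrow> real \<Rightarrow> real^'n \<Rightarrow> bool" where
  "D_optimal se2 sg2 \<rho> A I \<xi>s \<longleftrightarrow>
     is_design I \<xi>s \<and> estimable A \<xi>s \<and>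
     (\<forall>\<xi>. is_design I \<xi> \<and> estimable A \<xi> \<longrightarrow>
        ln (det (M_beta se2 sg2 \<rho> A \<xi>s)) \<ge> ln (det (M_beta se2 sg2 \<rho> A \<xi>)))"

end

theory Submission
  imports Defs
begin

text \<open>Estimability forces I_j > 0 for every j. For such a design, with D = M0(xi)^(1/2),
  se2 I + D Sigma_gamma D = D V(xi) D, where V(xi) = se2 M0(xi)^(-1) + Sigma_gamma is the covariance
  of the vector of group means; hence det M_beta(xi) = det(A)^2 / det V(xi). As V(xi) is diagonal
  plus the rank-one matrix sg2 rho 1 1^T, the matrix determinant lemma gives
  det V(xi) = prod d_j + sg2 rho sum_k prod_(j ~= k) d_j with d_j = se2 / I_j + sg2 (1 - rho).
  Since ln d_j is convex in I_j, Jensen bounds prod d_j below by its value d^J at the uniform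
  design, and AM-GM then bounds the sum of cofactors below by J d^(J-1); both bounds are attained
  by the uniform design.\<close>

lemma det_matrix_inv:
  fixes K :: "'a::field^'n^'n"
  assumes "det K \<noteq> 0"
  shows "det (matrix_inv K) = inverse (det K)"
proof -
  have "invertible K"
    using assms invertible_det_nz by blast
  then have "matrix_inv K ** K = mat 1"
    unfolding invertible_def matrix_inv_def by (rule someI2_ex) auto
  then have "det (matrix_inv K) * det K = 1"
    by (metis det_I det_mul)
  then show ?thesis
    using assms by (simp add: field_simps)
qed

lemma det_diagonal_except_row:
  fixes A :: "'a::comm_ring_1^'n^'n"
  assumes off_diag: "\<And>i j. i \<noteq> k \<Longrightarrow> i \<noteq> j \<Longrightarrow> A$i$j = 0"
  shows "det A = (\<Prod>i\<in>UNIV. A$i$i)"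
proof -
  have "of_int (sign p) * (\<Prod>i\<in>UNIV. A$i$p i) = 0"
    if p: "p \<in> {p. p permutes UNIV} - {id}" for p
  proof -
    have "\<exists>i. i \<noteq> k \<and> p i \<noteq> i"
    proof (rule ccontr)
      assume "\<not> ?thesis"
      then have "p permutes {k}"
        using p permutes_superset[of p UNIV "{k}"] by auto
      then show False
        using p by simp
    qed
    then obtain i where "i \<noteq> k" "p i \<noteq> i"
      by blast
    then have "A$i$p i = 0"
      using off_diag by simp
    then have "(\<Prod>i\<in>UNIV. A$i$p i) = 0"
      by (meson UNIV_I finite prod_zero)
    then show ?thesis
      by simp
  qed
  then have "(\<Sum>p\<in>{id}. of_int (sign p) * (\<Prod>i\<in>UNIV. A$i$p i))
      = (\<Sum>p | p permutes UNIV. of_int (sign p) * (\<Prod>i\<in>UNIV. A$i$p i))"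
    by (intro sum.mono_neutral_left) (auto simp: finite_permutations permutes_id)
  then show ?thesis
    unfolding det_def by (simp add: sign_id)
qed

lemma det_add_row_multiples:
  fixes A :: "'a::comm_ring_1^'n^'n"
  assumes "k \<notin> S"
  shows "det (\<chi> i. if i \<in> S then row i A + c i *s row k A else row i A) = det A"
proof -
  have "finite S" by simp
  then show ?thesis
    using assms
  proof (induction S)
    case empty
    then show ?case
      by (simp add: row_def vec_eq_iff)
  next
    case (insert m S)
    let ?B = "\<chi> i. if i \<in> S then row i A + c i *s row k A else row i A"
    have "m \<noteq> k" "row k ?B = row k A"
      using insert.prems by (auto simp: row_def vec_eq_iff)
    have "(\<chi> i. if i \<in> insert m S then row i A + c i *s row k A else row i A)
        = (\<chi> i. if i = m then row m ?B + c m *s row k ?B else row i ?B)"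
      using insert.hyps \<open>row k ?B = row k A\<close> by (auto simp: row_def vec_eq_iff)
    then show ?case
      using det_row_operation[OF \<open>m \<noteq> k\<close>, of ?B "c m"] insert by simp
  qed
qed

lemma det_diagonal_add_rank_one_rows:
  fixes g u v :: "'n::finite \<Rightarrow> 'a::comm_ring_1"
  shows "det (\<chi> i j. (if i = j then g i else 0) + (if i \<in> S then u i * v j else 0))
    = (\<Prod>i\<in>UNIV. g i) + (\<Sum>k\<in>S. u k * v k * (\<Prod>j\<in>UNIV-{k}. g j))"
proof -
  have "finite S" by simp
  then show ?thesis
  proof (induction S)
    case empty
    then show ?case
      by (simp add: det_diagonal)
  next
    case (insert k S)
    let ?B = "(\<chi> i j. (if i = j then g i else 0) + (if i \<in> S then u i * v j else 0))
      :: 'a^'n^'n"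
    let ?v = "\<chi> j. v j"
    let ?R = "\<chi> i. if i = k then ?v else row i ?B"
    have split: "(\<chi> i j. (if i = j then g i else 0) + (if i \<in> insert k S then u i * v j else 0))
      = (\<chi> i. if i = k then row k ?B + u k *s ?v else row i ?B)"
      using insert.hyps by (auto simp: vec_eq_iff row_def)
    have "(\<chi> i. if i = k then row k ?B else row i ?B) = ?B"
      by (simp add: vec_eq_iff row_def)
    moreover have "det ?R = v k * (\<Prod>j\<in>UNIV-{k}. g j)"
    proof -
      have "det ?R = det (\<chi> i. if i \<in> S then row i ?R + (- u i) *s row k ?R else row i ?R)"
        using insert.hyps by (simp add: det_add_row_multiples)
      also have "\<dots> = det ((\<chi> i j. if i = k then v j else if i = j then g i else 0) :: 'a^'n^'n)"
        using insert.hyps by (intro arg_cong[where f = det]) (auto simp: vec_eq_iff row_def)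
      also have "\<dots> = (\<Prod>i\<in>UNIV. if i = k then v i else g i)"
        by (subst det_diagonal_except_row[of k]) (auto intro: prod.cong)
      also have "\<dots> = v k * (\<Prod>j\<in>UNIV-{k}. g j)"
        by (subst prod.remove[of _ k]) (auto intro!: prod.cong)
      finally show ?thesis .
    qed
    ultimately show ?case
      unfolding split det_row_add det_row_mul
      using insert by (simp add: algebra_simps)
  qed
qed

lemma det_diagonal_add_rank_one:
  fixes g u v :: "'n::finite \<Rightarrow> 'a::comm_ring_1"
  shows "det (\<chi> i j. (if i = j then g i else 0) + u i * v j)
    = (\<Prod>i\<in>UNIV. g i) + (\<Sum>k\<in>UNIV. u k * v k * (\<Prod>j\<in>UNIV-{k}. g j))"
  using det_diagonal_add_rank_one_rows[of g UNIV u v] by simp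

lemma convex_on_ln_divide_plus:
  fixes a b :: real
  assumes "a > 0" "b \<ge> 0"
  shows "convex_on {0<..} (\<lambda>x. ln (a / x + b))"
proof (rule f''_ge0_imp_convex[where f' = "\<lambda>x. b / (a + b * x) - 1 / x"
      and f'' = "\<lambda>x. 1 / x\<^sup>2 - (b / (a + b * x))\<^sup>2"])
  fix x :: real
  assume "x \<in> {0<..}"
  then have x: "x > 0" by simp
  have ax: "a + b * x > 0"
    using assms x by (simp add: add_pos_nonneg)
  show "((\<lambda>x. ln (a / x + b)) has_real_derivative b / (a + b * x) - 1 / x) (at x)"
  proof -
    have "a / x + b > 0"
      using assms x by (simp add: add_pos_nonneg)
    then show ?thesis
      using x ax by (auto intro!: derivative_eq_intros simp: field_simps power2_eq_square)
  qed
  show "((\<lambda>x. b / (a + b * x) - 1 / x) has_real_derivative 1 / x\<^sup>2 - (b / (a + b * x))\<^sup>2) (at x)"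
    using x ax by (auto intro!: derivative_eq_intros simp: field_simps power2_eq_square)
  have "b / (a + b * x) \<le> 1 / x"
    using x ax assms by (simp add: field_simps)
  then have "(b / (a + b * x))\<^sup>2 \<le> (1 / x)\<^sup>2"
    using ax assms by (intro power_mono) auto
  then show "0 \<le> 1 / x\<^sup>2 - (b / (a + b * x))\<^sup>2"
    by (simp add: power_divide)
qed simp

lemma log_convex_prod_ge_power_mean:
  fixes f :: "real \<Rightarrow> real" and x :: "'i \<Rightarrow> real"
  assumes conv: "convex_on {0<..} (\<lambda>t. ln (f t))" and f_pos: "\<And>t. 0 < t \<Longrightarrow> 0 < f t"
    and S: "finite S" "S \<noteq> {}" and x_pos: "\<And>i. i \<in> S \<Longrightarrow> 0 < x i"
  shows "f ((\<Sum>i\<in>S. x i) / card S) ^ card S \<le> (\<Prod>i\<in>S. f (x i))"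
proof -
  let ?n = "real (card S)" and ?m = "(\<Sum>i\<in>S. x i) / card S"
  have n: "?n > 0"
    using S by (simp add: card_gt_0_iff)
  have "ln (f (\<Sum>i\<in>S. (1 / ?n) *\<^sub>R x i)) \<le> (\<Sum>i\<in>S. (1 / ?n) * ln (f (x i)))"
    using S x_pos by (intro convex_on_sum[OF _ _ conv]) auto
  moreover have "(\<Sum>i\<in>S. (1 / ?n) *\<^sub>R x i) = ?m"
    by (simp add: sum_divide_distrib)
  ultimately have "ln (f ?m) \<le> (\<Sum>i\<in>S. ln (f (x i))) / ?n"
    by (simp add: sum_divide_distrib)
  then have "?n * ln (f ?m) \<le> (\<Sum>i\<in>S. ln (f (x i)))"
    using n by (simp add: field_simps)
  moreover have "0 < ?m"
    using S x_pos n by (simp add: sum_pos)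
  moreover have "ln (\<Prod>i\<in>S. f (x i)) = (\<Sum>i\<in>S. ln (f (x i)))"
    using S f_pos x_pos by (intro ln_prod) (auto simp: less_imp_neq[symmetric])
  ultimately have "ln (f ?m ^ card S) \<le> ln (\<Prod>i\<in>S. f (x i))"
    using f_pos by (simp add: ln_realpow)
  then show ?thesis
    using f_pos x_pos \<open>0 < ?m\<close> by (simp add: prod_pos)
qed

lemma sum_prod_remove_ge:
  fixes d :: "'i \<Rightarrow> real" and D :: real
  assumes S: "finite S" "S \<noteq> {}" and d_pos: "\<And>i. i \<in> S \<Longrightarrow> 0 < d i"
    and "0 < D" and D_le: "D ^ card S \<le> (\<Prod>i\<in>S. d i)"
  shows "card S * D ^ (card S - 1) \<le> (\<Sum>k\<in>S. \<Prod>j\<in>S-{k}. d j)"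
proof -
  let ?n = "card S" and ?P = "\<Prod>i\<in>S. d i"
  have n: "?n \<ge> 1"
    using S by (simp add: Suc_leI card_gt_0_iff)
  have P: "?P > 0"
    using d_pos by (simp add: prod_pos)
  have cofactor: "(\<Prod>j\<in>S-{k}. d j) = ?P / d k" if "k \<in> S" for k
    using S that d_pos[OF that] by (simp add: prod.remove)
  have "(\<Prod>k\<in>S. ?P / d k) = ?P ^ ?n / ?P"
    by (simp add: prod_dividef)
  also have "\<dots> = ?P ^ (?n - 1)"
    using P n by (simp add: power_diff)
  finally have prod_cofactors: "(\<Prod>k\<in>S. \<Prod>j\<in>S-{k}. d j) = ?P ^ (?n - 1)"
    using cofactor by (simp cong: prod.cong)
  have "D ^ (?n - 1) = ((D ^ ?n) ^ (?n - 1)) powr (1 / ?n)"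
    using \<open>0 < D\<close> n by (simp add: powr_realpow[symmetric] powr_powr)
  also have "\<dots> \<le> (?P ^ (?n - 1)) powr (1 / ?n)"
    using \<open>0 < D\<close> D_le by (intro powr_mono2 power_mono) auto
  also have "\<dots> \<le> (\<Sum>k\<in>S. (\<Prod>j\<in>S-{k}. d j) / ?n)"
    unfolding prod_cofactors[symmetric]
    using S d_pos by (intro arith_geom_mean) (auto intro: prod_nonneg less_imp_le)
  finally show ?thesis
    using n by (simp add: sum_divide_distrib[symmetric] field_simps)
qed

definition group_means_cov :: "real \<Rightarrow> real \<Rightarrow> real \<Rightarrow> real^'n \<Rightarrow> real^'n^'n" where
  "group_means_cov se2 sg2 \<rho> \<xi> = (\<chi> i j. if i = j then se2 / \<xi>$i else 0) + Sigma_gamma sg2 \<rho>"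

lemma M0_sqrt_mult_left: "(M0_sqrt \<xi> ** X) $ i $ j = sqrt (\<xi>$i) * X$i$j"
proof -
  have "(\<Sum>k\<in>UNIV. (if i = k then sqrt (\<xi>$i) else 0) * X$k$j)
      = (\<Sum>k\<in>UNIV. if k = i then sqrt (\<xi>$i) * X$k$j else 0)"
    by (intro sum.cong) auto
  then show ?thesis
    by (simp add: M0_sqrt_def matrix_matrix_mult_def)
qed

lemma M0_sqrt_mult_right: "(X ** M0_sqrt \<xi>) $ i $ j = X$i$j * sqrt (\<xi>$j)"
proof -
  have "(\<Sum>k\<in>UNIV. X$i$k * (if k = j then sqrt (\<xi>$k) else 0))
      = (\<Sum>k\<in>UNIV. if k = j then X$i$k * sqrt (\<xi>$j) else 0)"
    by (intro sum.cong) auto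
  then show ?thesis
    by (simp add: M0_sqrt_def matrix_matrix_mult_def)
qed

lemma det_M0_sqrt: "det (M0_sqrt \<xi>) = (\<Prod>i\<in>UNIV. sqrt (\<xi>$i))"
  unfolding M0_sqrt_def by (simp add: det_diagonal)

lemma M_beta_middle_factor:
  assumes "\<forall>j. \<xi>$j > 0"
  shows "se2 *\<^sub>R mat 1 + M0_sqrt \<xi> ** Sigma_gamma sg2 \<rho> ** M0_sqrt \<xi>
    = M0_sqrt \<xi> ** group_means_cov se2 sg2 \<rho> \<xi> ** M0_sqrt \<xi>"
proof -
  have "sqrt (\<xi>$i) * (se2 / \<xi>$i) * sqrt (\<xi>$i) = se2" for i
  proof -
    have "sqrt (\<xi>$i) * sqrt (\<xi>$i) = \<xi>$i"
      using assms[rule_format, of i] by simp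
    then show ?thesis
      using assms[rule_format, of i] by (simp add: field_simps)
  qed
  then show ?thesis
    by (simp add: vec_eq_iff M0_sqrt_mult_left M0_sqrt_mult_right group_means_cov_def mat_def
        algebra_simps)
qed

lemma det_M_beta:
  assumes pos: "\<forall>j. \<xi>$j > 0" and nz: "det (group_means_cov se2 sg2 \<rho> \<xi>) \<noteq> 0"
  shows "det (M_beta se2 sg2 \<rho> A \<xi>) = det A ^ 2 / det (group_means_cov se2 sg2 \<rho> \<xi>)"
proof -
  let ?D = "M0_sqrt \<xi>" and ?V = "group_means_cov se2 sg2 \<rho> \<xi>"
  have "det ?D \<noteq> 0"
    using pos by (simp add: det_M0_sqrt prod_pos less_imp_neq[symmetric])
  then have "det (?D ** ?V ** ?D) \<noteq> 0"
    using nz by (simp add: det_mul)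
  then show ?thesis
    unfolding M_beta_def M_beta_middle_factor[OF pos]
    using \<open>det ?D \<noteq> 0\<close> by (simp add: det_mul det_matrix_inv field_simps power2_eq_square)
qed

lemma det_group_means_cov:
  "det (group_means_cov se2 sg2 \<rho> \<xi>)
    = (\<Prod>i\<in>UNIV. se2 / \<xi>$i + sg2 * (1 - \<rho>))
      + sg2 * \<rho> * (\<Sum>k\<in>UNIV. \<Prod>j\<in>UNIV-{k}. se2 / \<xi>$j + sg2 * (1 - \<rho>))"
proof -
  have "group_means_cov se2 sg2 \<rho> \<xi>
      = (\<chi> i j. (if i = j then se2 / \<xi>$i + sg2 * (1 - \<rho>) else 0) + sg2 * \<rho> * 1)"
    by (simp add: vec_eq_iff group_means_cov_def Sigma_gamma_def mat_def algebra_simps)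
  then show ?thesis
    by (simp add: det_diagonal_add_rank_one sum_distrib_left)
qed

lemma det_group_means_cov_pos:
  assumes "\<forall>j. \<xi>$j > 0" "se2 > 0" "sg2 \<ge> 0" "0 \<le> \<rho>" "\<rho> \<le> 1"
  shows "det (group_means_cov se2 sg2 \<rho> \<xi>) > 0"
proof -
  have d_pos: "se2 / \<xi>$i + sg2 * (1 - \<rho>) > 0" for i
    using assms by (intro add_pos_nonneg) auto
  then have "(\<Prod>i\<in>UNIV. se2 / \<xi>$i + sg2 * (1 - \<rho>)) > 0"
    by (simp add: prod_pos)
  moreover have "sg2 * \<rho> * (\<Sum>k\<in>UNIV. \<Prod>j\<in>UNIV-{k}. se2 / \<xi>$j + sg2 * (1 - \<rho>)) \<ge> 0"
    using assms d_pos by (intro mult_nonneg_nonneg sum_nonneg prod_nonneg) (auto intro: less_imp_le)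
  ultimately show ?thesis
    unfolding det_group_means_cov by linarith
qed

lemma det_group_means_cov_uniform_le:
  fixes \<xi> :: "real^'n"
  assumes pos: "\<forall>j. \<xi>$j > 0" and sum: "(\<Sum>j\<in>UNIV. \<xi>$j) = I"
    and "se2 > 0" "sg2 \<ge> 0" "0 \<le> \<rho>" "\<rho> \<le> 1"
  shows "det (group_means_cov se2 sg2 \<rho> (uniform_design I :: real^'n))
    \<le> det (group_means_cov se2 sg2 \<rho> \<xi>)"
proof -
  let ?J = "CARD('n)"
  define d where "d x = se2 / x + sg2 * (1 - \<rho>)" for x
  let ?D = "d (I / ?J)"
  have d_pos: "0 < d x" if "0 < x" for x
    using that assms unfolding d_def by (intro add_pos_nonneg) auto
  have "I > 0"
    using pos sum by (metis UNIV_not_empty finite sum_pos)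
  then have "0 < ?D"
    by (simp add: d_pos)
  have prod_ge: "?D ^ ?J \<le> (\<Prod>j\<in>UNIV. d (\<xi>$j))"
    using log_convex_prod_ge_power_mean[of d UNIV "\<lambda>j. \<xi>$j"] sum pos d_pos assms
    unfolding d_def by (simp add: convex_on_ln_divide_plus)
  have "?J * ?D ^ (?J - 1) \<le> (\<Sum>k\<in>UNIV. \<Prod>j\<in>UNIV-{k}. d (\<xi>$j))"
    using sum_prod_remove_ge[of UNIV "\<lambda>j. d (\<xi>$j)" ?D] prod_ge pos d_pos \<open>0 < ?D\<close> by simp
  then have "sg2 * \<rho> * (?J * ?D ^ (?J - 1)) \<le> sg2 * \<rho> * (\<Sum>k\<in>UNIV. \<Prod>j\<in>UNIV-{k}. d (\<xi>$j))"
    using assms by (intro mult_left_mono) auto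
  moreover have "det (group_means_cov se2 sg2 \<rho> (uniform_design I :: real^'n))
      = ?D ^ ?J + sg2 * \<rho> * (?J * ?D ^ (?J - 1))"
    by (simp add: det_group_means_cov uniform_design_def d_def card_Diff_singleton)
  ultimately show ?thesis
    using prod_ge by (simp add: det_group_means_cov d_def)
qed

lemma M0_mult_vector: "M0 \<xi> *v x = (\<chi> i. \<xi>$i * x$i)"
proof -
  have "(\<Sum>j\<in>UNIV. (if i = j then \<xi>$i else 0) * x$j) = (\<Sum>j\<in>UNIV. if j = i then \<xi>$i * x$j else 0)"
    for i
    by (intro sum.cong) auto
  then show ?thesis
    by (simp add: M0_def matrix_vector_mult_def vec_eq_iff)
qed

lemma estimable_imp_pos:
  fixes A :: "real^'n^'n"
  assumes "invertible A" "estimable A \<xi>" "\<xi>$k \<ge> 0"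
  shows "\<xi>$k > 0"
proof (rule ccontr)
  assume "\<not> \<xi>$k > 0"
  then have "\<xi>$k = 0"
    using assms(3) by simp
  have "A$k$j = 0" for j
  proof -
    obtain x where "column j A = M0 \<xi> *v x"
      using assms(2) unfolding estimable_def by blast
    then show ?thesis
      using \<open>\<xi>$k = 0\<close> by (simp add: M0_mult_vector column_def vec_eq_iff)
  qed
  then have "det A = 0"
    by (intro det_zero_row(1)[of k]) (simp add: row_def vec_eq_iff)
  then show False
    using assms(1) invertible_det_nz by blast
qed

lemma estimable_if_pos:
  fixes A :: "real^'n^'n"
  assumes "invertible A" "\<forall>j. \<xi>$j > 0"
  shows "estimable A \<xi>"
  unfolding estimable_def
proof (intro conjI allI)
  show "rank A = CARD('n)"
    using assms(1) invertible_det_nz det_eq_0_rank[of A] rank_bound[of A] by fastforce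
  fix j
  have "column j A = M0 \<xi> *v (\<chi> i. column j A $ i / \<xi>$i)"
    using assms(2) by (simp add: M0_mult_vector vec_eq_iff less_imp_neq[symmetric])
  then show "column j A \<in> range (\<lambda>x. M0 \<xi> *v x)"
    by blast
qed

theorem lemma4:
  fixes A :: "real^'n^'n" and se2 sg2 \<rho> I :: real
  assumes "se2 > 0" and "sg2 > 0" and "0 \<le> \<rho>" and "\<rho> \<le> 1"
    and "invertible A" and "I > 0"
  shows "D_optimal se2 sg2 \<rho> A I (uniform_design I)"
  unfolding D_optimal_def
proof (intro conjI allI impI)
  let ?u = "uniform_design I :: real^'n"
  let ?V = "group_means_cov se2 sg2 \<rho>"
  have u_pos: "\<forall>j. ?u$j > 0"
    using \<open>I > 0\<close> by (simp add: uniform_design_def)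
  show "is_design I ?u"
    using \<open>I > 0\<close> by (simp add: is_design_def uniform_design_def)
  show "estimable A ?u"
    using \<open>invertible A\<close> u_pos by (rule estimable_if_pos)
  fix \<xi> :: "real^'n"
  assume "is_design I \<xi> \<and> estimable A \<xi>"
  then have pos: "\<forall>j. \<xi>$j > 0" and sum: "(\<Sum>j\<in>UNIV. \<xi>$j) = I"
    using estimable_imp_pos[OF \<open>invertible A\<close>] unfolding is_design_def by blast+
  have "det (?V ?u) > 0" "det (?V \<xi>) > 0"
    using det_group_means_cov_pos[OF u_pos] det_group_means_cov_pos[OF pos] assms by auto
  moreover have "det A ^ 2 > 0"
    using \<open>invertible A\<close> by (simp add: invertible_det_nz)
  moreover have "det (?V ?u) \<le> det (?V \<xi>)"
    using det_group_means_cov_uniform_le[OF pos sum] assms by simp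
  ultimately show "ln (det (M_beta se2 sg2 \<rho> A \<xi>)) \<le> ln (det (M_beta se2 sg2 \<rho> A ?u))"
    using pos u_pos by (simp add: det_M_beta divide_left_mono)
qed

end
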